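(* Let $A$ be a circular $m\times n$ matrix with no dominating rows, and let $\Gamma$ be a circuit of $F(A)$ with winding number $p$ and $s$ essential bullets $1\le b_1<b_2<\dots<b_s\le n$. Then $\Gamma$ has exactly $s$ row arcs, and each row arc of $\Gamma$ jumps over exactly $p$ essential bullets of $\Gamma$, i.e., it has the form $(B_i^-,B_{i+p}^+)$ for some $i\in[s]$ (block indices modulo $s$). Moreover, $\gcd(s,p)=1$.
   Context: Notation: $[n]=\{1,\dots,n\}$ with addition mod $n$ (index $0$ identified with $n$); for $a,c\in[n]$ with $t\ge0$ minimal such that $a+t\equiv c\pmod n$, $[a,c]_n=\{a,\dots,a+t\}$ (mod $n$), $[a,c)_n=[a,c]_n\setminus\{c\}$. An $m\times n$ $\{0,1\}$-matrix $A=(a_{ij})$ is circular if for each row $i$ there are $\ell_i\in[n]$ and an integer $2\le k_i\le n-1$ with row $i$ the incidence vector of $[\ell_i,\ell_i+k_i)_n$. Row $i$ dominates row $\ell\ne i$ if $a_{ij}\ge a_{\ell j}$ for all $j$. $F(A)$: digraph on $[n]$ (labels mod $n$) with row arcs $a_i=(\ell_i-1,\ell_i+k_i-1)$ ($i\in[m]$, length $k_i$), forward short arcs $(j-1,j)$ (length $1$), reverse short arcs $(j,j-1)$ (length $-1$). A circuit is a simple directed circuit; winding number $p(\Gamma)$: $p(\Gamma)n=$ sum of its arc lengths. A row arc $a_i$ jumps over $j$ iff $j\in[\ell_i,\ell_i+k_i)_n$. For a circuit $\Gamma$: $\circ(\Gamma)=\{j:(j-1,j)\in E(\Gamma)\}$,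 $\otimes(\Gamma)=\{j:(j,j-1)\in E(\Gamma)\}$, $\bullet(\Gamma)=[n]\setminus(\circ(\Gamma)\cup\otimes(\Gamma))$; essential bullets are bullets that are nodes of $\Gamma$. Blocks: with essential bullets $b_1<\dots<b_s$ (indices mod $s$), for $j\in[s]$ define $v_j\in[b_j,b_{j+1})_n$: if $b_j+1\in\circ(\Gamma)$, $v_j$ is such that $[b_j+1,v_j]_n\subseteq\circ(\Gamma)$ and $v_j+1\notin\circ(\Gamma)$; if $b_j+1\in\otimes(\Gamma)$, $[b_j+1,v_j]_n\subseteq\otimes(\Gamma)$ and $v_j+1\notin\otimes(\Gamma)$; if $b_j+1\in\bullet(\Gamma)$, $v_j=b_j$. $B_j=[b_j,v_j]_n$ is a circle/cross/bullet block according as $b_j+1$ is a circle/cross/bullet. Set $B_j^-=b_j$, $B_j^+=v_j$ for a cross block; $B_j^-=v_j$, $B_j^+=b_j$ for a circle block; $B_j^-=B_j^+=b_j$ for a bullet block. *)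

theory Defs
  imports Main
begin

(* Columns/vertices are the integers 1..n; arithmetic on labels is modulo n,
   with residue 0 identified with n.  md n x is the representative of x in {1..n}. *)
definition md :: "nat \<Rightarrow> int \<Rightarrow> int" where
  "md n x = (x - 1) mod int n + 1"

(* [a,c]_n and [a,c)_n : t \<ge> 0 minimal with a + t = c (mod n) is (c - a) mod n *)
definition cint_cc :: "nat \<Rightarrow> int \<Rightarrow> int \<Rightarrow> int set" where
  "cint_cc n a c = {md n (a + t) | t. 0 \<le> t \<and> t \<le> (c - a) mod int n}"

definition cint_co :: "nat \<Rightarrow> int \<Rightarrow> int \<Rightarrow> int set" where
  "cint_co n a c = cint_cc n a c - {md n c}"

(* A (an m x n {0,1}-matrix, rows 1..m, columns 1..n) is circular, with
   witnesses l i, k i : row i is the incidence vector of [l i, l i + k i)_n *)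
definition circular_wit ::
  "nat \<Rightarrow> nat \<Rightarrow> (nat \<Rightarrow> int \<Rightarrow> nat) \<Rightarrow> (nat \<Rightarrow> int) \<Rightarrow> (nat \<Rightarrow> int) \<Rightarrow> bool" where
  "circular_wit m n A l k \<longleftrightarrow>
     (\<forall>i\<in>{1..m}. l i \<in> {1..int n} \<and> 2 \<le> k i \<and> k i \<le> int n - 1 \<and>
        (\<forall>j\<in>{1..int n}. A i j = (if j \<in> cint_co n (l i) (l i + k i) then 1 else 0)))"

definition circular :: "nat \<Rightarrow> nat \<Rightarrow> (nat \<Rightarrow> int \<Rightarrow> nat) \<Rightarrow> bool" where
  "circular m n A \<longleftrightarrow> (\<exists>l k. circular_wit m n A l k)"

definition dominates :: "nat \<Rightarrow> (nat \<Rightarrow> int \<Rightarrow> nat) \<Rightarrow> nat \<Rightarrow> nat \<Rightarrow> bool" where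
  "dominates n A i l \<longleftrightarrow> (\<forall>j\<in>{1..int n}. A i j \<ge> A l j)"

definition no_dominating_rows :: "nat \<Rightarrow> nat \<Rightarrow> (nat \<Rightarrow> int \<Rightarrow> nat) \<Rightarrow> bool" where
  "no_dominating_rows m n A \<longleftrightarrow>
     (\<forall>i\<in>{1..m}. \<forall>l\<in>{1..m}. i \<noteq> l \<longrightarrow> \<not> dominates n A i l)"

(* Arcs of the multi-digraph F(A): row arcs a_i, forward short arcs (j-1,j),
   reverse short arcs (j,j-1). *)
datatype arc = RowArc nat | FwdArc int | RevArc int

definition arcs_F :: "nat \<Rightarrow> nat \<Rightarrow> arc set" where
  "arcs_F m n = RowArc ` {1..m} \<union> FwdArc ` {1..int n} \<union> RevArc ` {1..int n}"

fun tailF :: "nat \<Rightarrow> (nat \<Rightarrow> int) \<Rightarrow> (nat \<Rightarrow> int) \<Rightarrow> arc \<Rightarrow> int" where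
  "tailF n l k (RowArc i) = md n (l i - 1)"
| "tailF n l k (FwdArc j) = md n (j - 1)"
| "tailF n l k (RevArc j) = md n j"

fun headF :: "nat \<Rightarrow> (nat \<Rightarrow> int) \<Rightarrow> (nat \<Rightarrow> int) \<Rightarrow> arc \<Rightarrow> int" where
  "headF n l k (RowArc i) = md n (l i + k i - 1)"
| "headF n l k (FwdArc j) = md n j"
| "headF n l k (RevArc j) = md n (j - 1)"

fun lenF :: "(nat \<Rightarrow> int) \<Rightarrow> arc \<Rightarrow> int" where
  "lenF k (RowArc i) = k i"
| "lenF k (FwdArc j) = 1"
| "lenF k (RevArc j) = -1"

definition is_circuit ::
  "nat \<Rightarrow> nat \<Rightarrow> (nat \<Rightarrow> int) \<Rightarrow> (nat \<Rightarrow> int) \<Rightarrow> arc list \<Rightarrow> bool" where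
  "is_circuit m n l k es \<longleftrightarrow>
     es \<noteq> [] \<and> set es \<subseteq> arcs_F m n \<and>
     (\<forall>t < length es. headF n l k (es ! t) = tailF n l k (es ! ((t + 1) mod length es))) \<and>
     distinct (map (tailF n l k) es)"

definition nodes :: "nat \<Rightarrow> (nat \<Rightarrow> int) \<Rightarrow> (nat \<Rightarrow> int) \<Rightarrow> arc list \<Rightarrow> int set" where
  "nodes n l k es = set (map (tailF n l k) es)"

definition circs :: "arc list \<Rightarrow> int set" where
  "circs es = {j. FwdArc j \<in> set es}"

definition crosses :: "arc list \<Rightarrow> int set" where
  "crosses es = {j. RevArc j \<in> set es}"

definition bullets :: "nat \<Rightarrow> arc list \<Rightarrow> int set" where
  "bullets n es = {1..int n} - (circs es \<union> crosses es)"

definition ess_bullets :: "nat \<Rightarrow> (nat \<Rightarrow> int) \<Rightarrow> (nat \<Rightarrow> int) \<Rightarrow> arc list \<Rightarrow> int set" where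
  "ess_bullets n l k es = bullets n es \<inter> nodes n l k es"

(* b_j, j \<in> [s] with indices taken modulo s: the essential bullets in increasing order *)
definition bul :: "nat \<Rightarrow> (nat \<Rightarrow> int) \<Rightarrow> (nat \<Rightarrow> int) \<Rightarrow> arc list \<Rightarrow> int \<Rightarrow> int" where
  "bul n l k es j =
     (let S = ess_bullets n l k es
      in sorted_list_of_set S ! nat (md (card S) j - 1))"

(* the end v_j of block B_j starting at b = b_j *)
definition blockend :: "nat \<Rightarrow> arc list \<Rightarrow> int \<Rightarrow> int" where
  "blockend n es b =
     (if md n (b + 1) \<in> circs es then
        (THE v. v \<in> {1..int n} \<and> cint_cc n (b + 1) v \<subseteq> circs es \<and> md n (v + 1) \<notin> circs es)
      else if md n (b + 1) \<in> crosses es then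
        (THE v. v \<in> {1..int n} \<and> cint_cc n (b + 1) v \<subseteq> crosses es \<and> md n (v + 1) \<notin> crosses es)
      else b)"

definition Bminus :: "nat \<Rightarrow> (nat \<Rightarrow> int) \<Rightarrow> (nat \<Rightarrow> int) \<Rightarrow> arc list \<Rightarrow> int \<Rightarrow> int" where
  "Bminus n l k es j =
     (let b = bul n l k es j in
      if md n (b + 1) \<in> circs es then blockend n es b else b)"

definition Bplus :: "nat \<Rightarrow> (nat \<Rightarrow> int) \<Rightarrow> (nat \<Rightarrow> int) \<Rightarrow> arc list \<Rightarrow> int \<Rightarrow> int" where
  "Bplus n l k es j =
     (let b = bul n l k es j in
      if md n (b + 1) \<in> crosses es then blockend n es b else b)"

definition jumps_over :: "nat \<Rightarrow> (nat \<Rightarrow> int) \<Rightarrow> (nat \<Rightarrow> int) \<Rightarrow> nat \<Rightarrow> int \<Rightarrow> bool" where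
  "jumps_over n l k i j \<longleftrightarrow> j \<in> cint_co n (l i) (l i + k i)"

end

theory Submission
  imports Defs
begin

(* Lift the circuit to the integers and let N x count the essential bullets among the lifted
   columns 1, ..., x, so that N (x + n) = N x + s.  Behind the tail of a row arc lies a run of
   circles back to an essential bullet, so the tail is B^-_j for j = N (tail); dually the head
   is B^+_j for j = N (head), behind a run of crosses.  Distinct tails give distinct indices
   modulo s, and following circles forward from any essential bullet leads to a row tail, so
   there are exactly s row arcs.  If the tail of row b comes right after that of row a, then b
   cannot end before a (no domination), so the jump N (head) - N (tail) never decreases along
   the cyclic order of tails and is constant; adding up the increments of N around the circuit
   shows that it equals p.  Finally the rows met along the circuit have tail indices
   N0, N0 + p, ..., N0 + (s - 1) p modulo s, which are pairwise distinct: gcd s p = 1. *)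

section \<open>Residues modulo n\<close>

lemma md_in_range: "n > 0 \<Longrightarrow> md n x \<in> {1..int n}"
proof -
  assume "n > 0"
  then have "0 \<le> (x - 1) mod int n" "(x - 1) mod int n < int n" by simp_all
  then show ?thesis unfolding md_def by simp
qed

lemma md_eq_self: "x \<in> {1..int n} \<Longrightarrow> md n x = x"
  unfolding md_def by auto

lemma md_eq_md_iff: "md n a = md n b \<longleftrightarrow> (\<exists>c. a = b + c * int n)"
proof -
  have "md n a = md n b \<longleftrightarrow> (a - 1) mod int n = (b - 1) mod int n"
    unfolding md_def by simp
  also have "\<dots> \<longleftrightarrow> int n dvd a - b"
    by (simp add: mod_eq_dvd_iff)
  also have "\<dots> \<longleftrightarrow> (\<exists>c. a = b + c * int n)"
    by (auto simp: dvd_def algebra_simps)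
  finally show ?thesis .
qed

lemma md_add_mult: "md n (x + c * int n) = md n x"
  using md_eq_md_iff by blast

lemma md_md_add: "md n (md n a + b) = md n (a + b)"
  unfolding md_def by (simp add: algebra_simps mod_simps)

lemma md_add_md: "md n (b + md n a) = md n (b + a)"
  using md_md_add[of n a b] by (simp add: add.commute)

lemma md_md [simp]: "md n (md n a) = md n a"
  using md_md_add[of n a 0] by simp

lemma md_md_diff: "md n (md n a - b) = md n (a - b)"
  using md_md_add[of n a "- b"] by simp

lemma md_minus_1_eqD:
  assumes "j \<in> {1..int n}" "md n (j - 1) = b"
  shows "j = md n (b + 1)"
  using assms md_md_add[of n "j - 1" 1] by (simp add: md_eq_self)

lemma md_minus_mod:
  assumes "0 \<le> d" "d < int n"
  shows "(md n (a + d) - a) mod int n = d"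
proof -
  obtain c where "a + d = md n (a + d) + c * int n"
    using md_eq_md_iff[of n "a + d" "md n (a + d)"] by auto
  then have "md n (a + d) - a = d + (- c) * int n" by simp
  then show ?thesis using assms by (simp only: mod_mult_self1) simp
qed

lemma md_inj_window:
  assumes "md n a = md n b" "a \<le> b" "b < a + int n"
  shows "a = b"
proof -
  obtain c where "b = a + c * int n" using assms(1) md_eq_md_iff by metis
  with assms(2,3) show ?thesis
    by (cases "c = 0") (auto simp: zero_le_mult_iff mult_less_cancel_right2)
qed

lemma md_plus_1:
  assumes "n > 0"
  shows "md n (x + 1) = (if md n x < int n then md n x + 1 else 1)"
proof -
  have "md n (x + 1) = md n (md n x + 1)" by (simp add: md_md_add)
  then show ?thesis
    using md_in_range[OF assms, of x] md_add_mult[of n 1 1] by (auto simp: md_eq_self add.commute)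
qed

section \<open>Counting a periodic set\<close>

lemma sorted_list_of_set_nth_card_less:
  fixes E :: "'a::linorder set"
  assumes "finite E" "e \<in> E"
  shows "sorted_list_of_set E ! card {x \<in> E. x < e} = e"
proof -
  let ?xs = "sorted_list_of_set E"
  have sorted: "sorted_wrt (<) ?xs" and set_xs: "set ?xs = E" using assms by simp_all
  obtain i where i: "i < length ?xs" "?xs ! i = e"
    using assms set_xs by (metis in_set_conv_nth)
  have "{x \<in> E. x < e} = set (take i ?xs)"
  proof (intro set_eqI iffI)
    fix x assume "x \<in> {x \<in> E. x < e}"
    then have "x \<in> set ?xs" "x < e" using set_xs by auto
    then obtain j where j: "j < length ?xs" "?xs ! j = x" by (auto simp: in_set_conv_nth)
    have "j < i"
    proof (rule ccontr)
      assume "\<not> j < i"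
      then have "?xs ! i \<le> ?xs ! j"
        using sorted_wrt_nth_less[OF sorted, of i j] j(1) by (cases "i = j") auto
      then show False using j i \<open>x < e\<close> by simp
    qed
    then show "x \<in> set (take i ?xs)" using j by (auto simp: in_set_conv_nth intro!: exI[of _ j])
  next
    fix x assume "x \<in> set (take i ?xs)"
    then obtain j where "j < i" "x = ?xs ! j" by (auto simp: in_set_conv_nth)
    then show "x \<in> {x \<in> E. x < e}"
      using i set_xs sorted_wrt_nth_less[OF sorted] by auto
  qed
  then have "card {x \<in> E. x < e} = i"
    using i(1) strict_sorted_iff sorted by (simp add: distinct_card)
  with i show ?thesis by simp
qed

text \<open>For \<open>E \<subseteq> {1..n}\<close> this counts the integers \<open>y \<in> [1, x]\<close> with \<open>md n y \<in> E\<close>,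
  extended to all of \<open>\<int>\<close> so that it grows by \<open>card E\<close> over every period of length \<open>n\<close>.\<close>
definition periodic_count :: "nat \<Rightarrow> int set \<Rightarrow> int \<Rightarrow> int" where
  "periodic_count n E x =
     int (card E) * ((x - md n x) div int n) + int (card {e \<in> E. e \<le> md n x})"

lemma periodic_count_add_period:
  assumes "n > 0"
  shows "periodic_count n E (x + c * int n) = periodic_count n E x + c * int (card E)"
proof -
  have "(x + c * int n - md n x) div int n = (x - md n x) div int n + c"
    using assms by (simp add: diff_add_eq[symmetric])
  then show ?thesis
    unfolding periodic_count_def md_add_mult by (simp add: algebra_simps)
qed

lemma periodic_count_plus_1:
  assumes n: "n > 0" and E: "E \<subseteq> {1..int n}"
  shows "periodic_count n E (x + 1) = periodic_count n E x + (if md n (x + 1) \<in> E then 1 else 0)"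
proof (cases "md n x < int n")
  case True
  then have md: "md n (x + 1) = md n x + 1" using md_plus_1[OF n] by simp
  have "{e \<in> E. e \<le> md n x + 1} =
      {e \<in> E. e \<le> md n x} \<union> (if md n x + 1 \<in> E then {md n x + 1} else {})"
    by (auto simp: le_less zle_add1_eq_le)
  moreover have "finite E" using E finite_subset by blast
  ultimately have "card {e \<in> E. e \<le> md n x + 1} =
      card {e \<in> E. e \<le> md n x} + (if md n x + 1 \<in> E then 1 else 0)"
    by (auto simp: card_insert_if)
  then show ?thesis unfolding periodic_count_def md by (simp add: algebra_simps)
next
  case False
  then have mx: "md n x = int n" using md_in_range[OF n, of x] by auto
  then have md: "md n (x + 1) = 1" using md_plus_1[OF n, of x] by simp
  have "{e \<in> E. e \<le> int n} = E" "{e \<in> E. e \<le> 1} = (if 1 \<in> E then {1} else {})"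
    using E by auto
  moreover have "(x + 1 - 1) div int n = (x - int n) div int n + 1"
    using n div_add_self2[of "int n" "x - int n"] by simp
  ultimately show ?thesis unfolding periodic_count_def md mx by (simp add: algebra_simps)
qed

lemma periodic_count_mono:
  assumes n: "n > 0" and E: "E \<subseteq> {1..int n}" and "x \<le> y"
  shows "periodic_count n E x \<le> periodic_count n E y"
proof -
  have "periodic_count n E x \<le> periodic_count n E (x + int d)" for d
  proof (induction d)
    case (Suc d)
    then show ?case
      using periodic_count_plus_1[OF n E, of "x + int d"]
      by (simp add: algebra_simps split: if_splits)
  qed simp
  from this[of "nat (y - x)"] show ?thesis using \<open>x \<le> y\<close> by simp
qed

lemma periodic_count_const:
  assumes n: "n > 0" and E: "E \<subseteq> {1..int n}"
    and not_in: "\<And>t. 1 \<le> t \<Longrightarrow> t \<le> d \<Longrightarrow> md n (x + int t) \<notin> E"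
  shows "periodic_count n E (x + int d) = periodic_count n E x"
  using not_in
proof (induction d)
  case (Suc d)
  then show ?case
    using periodic_count_plus_1[OF n E, of "x + int d"] Suc.prems[of "Suc d"]
    by (simp add: ac_simps)
qed simp

lemma periodic_count_window:
  assumes n: "n > 0" and E: "E \<subseteq> {1..int n}" and "d \<le> n"
  shows "int (card {e \<in> E. e \<in> md n ` {x + 1..x + int d}}) =
    periodic_count n E (x + int d) - periodic_count n E x"
  using \<open>d \<le> n\<close>
proof (induction d)
  case (Suc d)
  have new: "md n (x + int d + 1) \<notin> md n ` {x + 1..x + int d}"
  proof
    assume "md n (x + int d + 1) \<in> md n ` {x + 1..x + int d}"
    then obtain z where "z \<in> {x + 1..x + int d}" "md n z = md n (x + int d + 1)" by auto
    with Suc.prems show False using md_inj_window[of n z "x + int d + 1"] by auto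
  qed
  have "{x + 1..x + int (Suc d)} = insert (x + int d + 1) {x + 1..x + int d}" by auto
  then have "{e \<in> E. e \<in> md n ` {x + 1..x + int (Suc d)}} =
      {e \<in> E. e \<in> md n ` {x + 1..x + int d}} \<union>
      (if md n (x + int d + 1) \<in> E then {md n (x + int d + 1)} else {})"
    by auto
  moreover have "finite E" using E finite_subset by blast
  ultimately have "card {e \<in> E. e \<in> md n ` {x + 1..x + int (Suc d)}} =
      card {e \<in> E. e \<in> md n ` {x + 1..x + int d}} + (if md n (x + int d + 1) \<in> E then 1 else 0)"
    using new by (auto simp: card_insert_if)
  then show ?case
    using Suc periodic_count_plus_1[OF n E, of "x + int d"] by (simp add: algebra_simps)
qed simp

lemma nth_sorted_list_of_set_periodic_count:
  assumes n: "n > 0" and E: "E \<subseteq> {1..int n}" and x: "md n x \<in> E"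
  shows "sorted_list_of_set E ! nat (md (card E) (periodic_count n E x) - 1) = md n x"
proof -
  have fin: "finite E" using E finite_subset by blast
  let ?below = "{e \<in> E. e < md n x}"
  have "{e \<in> E. e \<le> md n x} = insert (md n x) ?below" using x by auto
  then have "card {e \<in> E. e \<le> md n x} = Suc (card ?below)" using fin by simp
  moreover have "card ?below < card E"
    using fin x by (intro psubset_card_mono) auto
  moreover obtain c where "x = md n x + c * int n"
    using md_eq_md_iff[of n x "md n x"] by auto
  then have "x - md n x = c * int n" by simp
  then have "(x - md n x) div int n = c" using n by simp
  ultimately have "periodic_count n E x = (int (card ?below) + 1) + c * int (card E)"
    and "int (card ?below) + 1 \<in> {1..int (card E)}"
    unfolding periodic_count_def by (auto simp: algebra_simps)
  then have "md (card E) (periodic_count n E x) = int (card ?below) + 1"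
    by (simp add: md_add_mult md_eq_self)
  then show ?thesis using sorted_list_of_set_nth_card_less[OF fin x] by simp
qed

section \<open>Circular intervals and runs\<close>

lemma cint_cc_eq_image: "cint_cc n a c = md n ` {a..a + (c - a) mod int n}"
  unfolding cint_cc_def
proof (intro set_eqI iffI)
  fix x assume "x \<in> {md n (a + t) |t. 0 \<le> t \<and> t \<le> (c - a) mod int n}"
  then show "x \<in> md n ` {a..a + (c - a) mod int n}" by force
next
  fix x assume "x \<in> md n ` {a..a + (c - a) mod int n}"
  then obtain z where "x = md n z" "z \<in> {a..a + (c - a) mod int n}" by auto
  then show "x \<in> {md n (a + t) |t. 0 \<le> t \<and> t \<le> (c - a) mod int n}"
    by (intro CollectI exI[of _ "z - a"]) auto
qed

lemma md_image_interval_cong: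
  assumes "md n x = md n y"
  shows "md n ` {x + a..x + b} = md n ` {y + a..y + b}"
proof -
  have sub: "md n ` {x + a..x + b} \<subseteq> md n ` {y + a..y + b}" if xy: "md n x = md n y" for x y
  proof
    fix v assume "v \<in> md n ` {x + a..x + b}"
    then obtain z where "v = md n z" "z \<in> {x + a..x + b}" by auto
    moreover obtain c where "x = y + c * int n" using xy md_eq_md_iff by blast
    ultimately show "v \<in> md n ` {y + a..y + b}"
      using md_add_mult[of n "z - c * int n" c] by (intro image_eqI[of _ _ "z - c * int n"]) auto
  qed
  show ?thesis using sub[OF assms] sub[OF assms[symmetric]] by blast
qed

lemma cint_co_eq_image:
  assumes n: "n > 0" and k: "1 \<le> k" "k < int n" and x: "md n x = md n (a - 1)"
  shows "cint_co n a (a + k) = md n ` {x + 1..x + k}"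
proof -
  have "cint_cc n a (a + k) = md n ` {a..a + k}"
    using k by (simp add: cint_cc_eq_image)
  also have "{a..a + k} = insert (a + k) {a..a + k - 1}" using k by auto
  finally have cc: "cint_cc n a (a + k) = insert (md n (a + k)) (md n ` {a..a + k - 1})"
    by simp
  have "md n (a + k) \<notin> md n ` {a..a + k - 1}"
  proof
    assume "md n (a + k) \<in> md n ` {a..a + k - 1}"
    then obtain z where "z \<in> {a..a + k - 1}" "md n z = md n (a + k)" by auto
    then show False using md_inj_window[of n z "a + k"] k by auto
  qed
  then have "cint_co n a (a + k) = md n ` {(a - 1) + 1..(a - 1) + k}"
    unfolding cint_co_def cc by auto
  then show ?thesis using md_image_interval_cong[OF x] by simp
qed

lemma the_run_end_eq:
  assumes n: "n > 0" and d: "0 \<le> d" "d < int n"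
    and run: "\<And>t. 0 \<le> t \<Longrightarrow> t \<le> d \<Longrightarrow> md n (a + t) \<in> S" and stop: "md n (a + d + 1) \<notin> S"
  shows "(THE w. w \<in> {1..int n} \<and> cint_cc n a w \<subseteq> S \<and> md n (w + 1) \<notin> S) = md n (a + d)"
proof (rule the_equality)
  have "md n ` {a..a + d} \<subseteq> S"
  proof
    fix v assume "v \<in> md n ` {a..a + d}"
    then obtain z where "v = md n z" "z \<in> {a..a + d}" by auto
    then show "v \<in> S" using run[of "z - a"] by auto
  qed
  then show "md n (a + d) \<in> {1..int n} \<and> cint_cc n a (md n (a + d)) \<subseteq> S \<and>
      md n (md n (a + d) + 1) \<notin> S"
    using md_in_range[OF n] stop d by (simp add: cint_cc_eq_image md_md_add md_minus_mod)
next
  fix w assume w: "w \<in> {1..int n} \<and> cint_cc n a w \<subseteq> S \<and> md n (w + 1) \<notin> S"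
  let ?d = "(w - a) mod int n"
  have "0 \<le> ?d" "?d < int n" using n by simp_all
  have w_eq: "md n w = md n (a + ?d)"
    using md_add_mult[of n "a + ?d" "(w - a) div int n"] div_mult_mod_eq[of "w - a" "int n"]
    by (simp add: algebra_simps)
  have "?d = d"
  proof (rule ccontr)
    assume "?d \<noteq> d"
    then consider "?d < d" | "d < ?d" by linarith
    then show False
    proof cases
      case 1
      then have "md n (a + (?d + 1)) \<in> S" using run \<open>0 \<le> ?d\<close> by simp
      moreover have "md n (w + 1) = md n (a + (?d + 1))"
        using md_md_add[of n w 1] md_md_add[of n "a + ?d" 1] w_eq by (simp add: add.assoc)
      ultimately show False using w by simp
    next
      case 2
      then have "md n (a + d + 1) \<in> cint_cc n a w" using d by (auto simp: cint_cc_eq_image)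
      then show False using w stop by auto
    qed
  qed
  then show "w = md n (a + d)" using w_eq w md_eq_self[of w n] by simp
qed

text \<open>Walking backwards from the endpoint \<open>x\<close> of \<open>e\<close> along \<open>step\<close> arcs ends, after fewer
  than \<open>n\<close> steps, at a node \<open>\<beta>\<close> with neither a \<open>step\<close> nor a \<open>block\<close> arc at \<open>\<beta>\<close>: each
  of those would share its endpoint with \<open>e\<close> or with the last \<open>step\<close> arc.\<close>
lemma run_back_to_node:
  fixes V :: "arc \<Rightarrow> int" and step block :: "int \<Rightarrow> arc"
  assumes n: "n > 0" and inj: "inj_on V (set es)"
    and V_step: "\<And>j. V (step j) = md n (j - 1)" and V_block: "\<And>j. V (block j) = md n j"
    and e: "e \<in> set es" "V e = md n x" "\<And>j. step j \<noteq> e" "\<And>j. block j \<noteq> e"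
    and step_ne_block: "\<And>j j'. step j \<noteq> block j'"
  obtains r :: nat where "r < n"
    "\<And>t. 0 \<le> t \<Longrightarrow> t < int r \<Longrightarrow> step (md n (x - t)) \<in> set es"
    "step (md n (x - int r)) \<notin> set es" "block (md n (x - int r)) \<notin> set es"
    "md n (x - int r) \<in> V ` set es" "step (md n (x + 1)) \<notin> set es"
proof -
  have not_next: "step (md n (x + 1)) \<notin> set es"
  proof
    assume "step (md n (x + 1)) \<in> set es"
    moreover have "V (step (md n (x + 1))) = V e" using V_step e(2) by (simp add: md_md_diff)
    ultimately show False using inj e(1,3) by (auto dest: inj_onD)
  qed
  have "md n (x - int (n - 1)) = md n (x + 1)"
    using md_add_mult[of n "x + 1" "- 1"] n by (simp add: of_nat_diff algebra_simps)
  then have ex: "\<exists>r. step (md n (x - int r)) \<notin> set es" using not_next by metis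
  define r where "r = (LEAST r. step (md n (x - int r)) \<notin> set es)"
  have stop: "step (md n (x - int r)) \<notin> set es" using LeastI_ex[OF ex] unfolding r_def .
  have "r \<le> n - 1"
    unfolding r_def using not_next \<open>md n (x - int (n - 1)) = md n (x + 1)\<close> by (metis Least_le)
  then have "r < n" using n by simp
  have run: "step (md n (x - t)) \<in> set es" if "0 \<le> t" "t < int r" for t
    using not_less_Least[of "nat t" "\<lambda>r. step (md n (x - int r)) \<notin> set es"] that
    unfolding r_def by simp
  define w where "w = (if r = 0 then e else step (md n (x - int (r - 1))))"
  have w: "w \<in> set es" "V w = md n (x - int r)"
    using e(1,2) run[of "int (r - 1)"] V_step
    by (auto simp: w_def md_md_diff of_nat_diff algebra_simps)
  have "block (md n (x - int r)) \<notin> set es"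
  proof
    assume "block (md n (x - int r)) \<in> set es"
    moreover have "V (block (md n (x - int r))) = V w" using w(2) V_block by simp
    ultimately have "block (md n (x - int r)) = w" using inj w(1) by (auto dest: inj_onD)
    then show False using e(4) step_ne_block by (metis w_def)
  qed
  then show ?thesis using that \<open>r < n\<close> run stop w not_next by (metis imageI)
qed

section \<open>Periodic functions and coprimality\<close>

lemma mono_step_periodic_const:
  fixes f :: "int \<Rightarrow> 'a::order"
  assumes step: "\<And>g. f g \<le> f (g + 1)" and period: "\<And>g. f (g + s) = f g" and "s > 0"
  shows "f g = f h"
proof -
  have mono: "f g \<le> f (g + int d)" for g d
  proof (induction d)
    case (Suc d)
    then show ?case using step[of "g + int d"] by (simp add: ac_simps)
  qed simp
  have periodic: "f (g + int c * s) = f g" for g c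
  proof (induction c)
    case (Suc c)
    then show ?case using period[of "g + int c * s"] by (simp add: algebra_simps)
  qed simp
  have le: "f h \<le> f g" for g h
  proof -
    let ?c = "nat \<bar>h - g\<bar>"
    have "\<bar>h - g\<bar> \<le> \<bar>h - g\<bar> * s" using \<open>s > 0\<close> by (simp add: mult_le_cancel_left1)
    then have "h \<le> g + int ?c * s" by simp
    then have "h + int (nat (g + int ?c * s - h)) = g + int ?c * s" by simp
    then have "f h \<le> f (g + int ?c * s)" using mono[of h] by metis
    then show ?thesis using periodic[of g ?c] by simp
  qed
  show ?thesis using le[of g h] le[of h g] by simp
qed

lemma gcd_eq_1_if_no_small_multiple:
  fixes s p :: int
  assumes "s > 0" and no_multiple: "\<And>c. 0 < c \<Longrightarrow> c < s \<Longrightarrow> \<not> s dvd p * c"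
  shows "gcd s p = 1"
proof (rule ccontr)
  let ?d = "gcd s p"
  assume "?d \<noteq> 1"
  moreover have "?d > 0" using \<open>s > 0\<close> by simp
  ultimately have "?d \<ge> 2" by linarith
  have "?d \<le> s" using \<open>s > 0\<close> by (simp add: zdvd_imp_le)
  then have "0 < s div ?d" using \<open>?d > 0\<close> by (simp add: pos_imp_zdiv_pos_iff)
  moreover have "s div ?d < s" using \<open>s > 0\<close> \<open>?d \<ge> 2\<close> by (simp add: int_div_less_self)
  moreover have "p * (s div ?d) = (p div ?d) * s"
    by (metis dvd_div_mult dvd_mult_div_cancel gcd_dvd1 gcd_dvd2 mult.commute)
  ultimately show False using no_multiple[of "s div ?d"] by simp
qed

section \<open>Circuits of F(A)\<close>

locale F_circuit =
  fixes m n :: nat and A :: "nat \<Rightarrow> int \<Rightarrow> nat" and l k :: "nat \<Rightarrow> int" and es :: "arc list"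
  assumes circ: "circular_wit m n A l k"
    and circuit: "is_circuit m n l k es"
    and nondeg: "circs es \<inter> crosses es = {}"
begin

abbreviation "T \<equiv> tailF n l k"
abbreviation "H \<equiv> headF n l k"
abbreviation "E \<equiv> ess_bullets n l k es"
abbreviation "N \<equiv> periodic_count n E"

lemma es_nonempty: "es \<noteq> []"
  using circuit unfolding is_circuit_def by simp

lemma arcs_in_F: "e \<in> set es \<Longrightarrow> e \<in> arcs_F m n"
  using circuit unfolding is_circuit_def by auto

lemma row_arc_bounds:
  assumes "RowArc i \<in> set es"
  shows "i \<in> {1..m}" "l i \<in> {1..int n}" "2 \<le> k i" "k i \<le> int n - 1"
proof -
  show i: "i \<in> {1..m}" using arcs_in_F[OF assms] unfolding arcs_F_def by auto
  then show "l i \<in> {1..int n}" "2 \<le> k i" "k i \<le> int n - 1"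
    using circ unfolding circular_wit_def by auto
qed

lemma short_arc_bounds:
  "FwdArc j \<in> set es \<Longrightarrow> j \<in> {1..int n}" "RevArc j \<in> set es \<Longrightarrow> j \<in> {1..int n}"
  by (auto dest!: arcs_in_F simp: arcs_F_def)

lemma n_pos: "n > 0"
proof -
  obtain e where e: "e \<in> set es" using es_nonempty by (meson last_in_set)
  then show ?thesis
    using row_arc_bounds short_arc_bounds by (cases e rule: arc.exhaust) fastforce+
qed

lemma head_eq_tail_next: "t < length es \<Longrightarrow> H (es ! t) = T (es ! ((t + 1) mod length es))"
  using circuit unfolding is_circuit_def by auto

lemma distinct_tails: "distinct (map T es)"
  using circuit unfolding is_circuit_def by auto

lemma heads_rotate_tails: "map H es = rotate 1 (map T es)"
proof (rule nth_equalityI)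
  fix t assume "t < length (map H es)"
  then show "map H es ! t = rotate 1 (map T es) ! t"
    using head_eq_tail_next es_nonempty by (simp add: nth_rotate1)
qed simp

lemma distinct_arcs: "distinct es"
  using distinct_tails by (simp add: distinct_map)

lemma inj_on_tail: "inj_on T (set es)"
  using distinct_tails by (simp add: distinct_map)

lemma inj_on_head: "inj_on H (set es)"
  using distinct_tails heads_rotate_tails by (metis distinct_map distinct_rotate)

lemma nodes_eq_tails: "nodes n l k es = T ` set es"
  unfolding nodes_def by simp

lemma nodes_eq_heads: "nodes n l k es = H ` set es"
  using heads_rotate_tails unfolding nodes_def by (metis list.set_map set_rotate)

lemma tail_in_range: "T e \<in> {1..int n}"
  using md_in_range[OF n_pos] by (cases e) simp_all

lemma head_eq_tail_plus_length: "H e = md n (T e + lenF k e)"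
  by (cases e) (simp_all add: md_md_add md_add_md md_md_diff algebra_simps)

lemma ess_bullets_iff:
  "b \<in> E \<longleftrightarrow> b \<in> {1..int n} \<and> FwdArc b \<notin> set es \<and> RevArc b \<notin> set es \<and> b \<in> nodes n l k es"
  unfolding ess_bullets_def bullets_def circs_def crosses_def by auto

lemma ess_bullets_subset: "E \<subseteq> {1..int n}"
  using ess_bullets_iff by blast

lemma finite_ess_bullets: "finite E"
  using ess_bullets_subset finite_subset by blast

lemma bul_periodic_count_run:
  assumes "md n (x - int r) \<in> E" and run: "\<And>t. 0 \<le> t \<Longrightarrow> t < int r \<Longrightarrow> md n (x - t) \<notin> E"
  shows "bul n l k es (N x) = md n (x - int r)"
proof -
  have "N (x - int r + int r) = N (x - int r)"
  proof (rule periodic_count_const[OF n_pos ess_bullets_subset])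
    fix t assume "1 \<le> t" "t \<le> r"
    then show "md n (x - int r + int t) \<notin> E"
      using run[of "int r - int t"] by (simp add: algebra_simps)
  qed
  then show ?thesis
    using nth_sorted_list_of_set_periodic_count[OF n_pos ess_bullets_subset assms(1)]
    by (simp add: bul_def)
qed

lemma blockend_run:
  assumes S: "S = circs es \<or> S = crosses es" and r: "0 < r" "r < n"
    and run: "\<And>t. 0 \<le> t \<Longrightarrow> t < int r \<Longrightarrow> md n (x - t) \<in> S" and stop: "md n (x + 1) \<notin> S"
  shows "blockend n es (md n (x - int r)) = md n x"
proof -
  let ?b = "md n (x - int r)"
  have shift: "md n (?b + 1 + t) = md n (x - (int r - 1 - t))" for t
    using md_md_add[of n "x - int r" "1 + t"] by (simp add: algebra_simps)
  have "md n (?b + 1) \<in> S" using run[of "int r - 1"] shift[of 0] r by simp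
  then have "blockend n es ?b =
      (THE w. w \<in> {1..int n} \<and> cint_cc n (?b + 1) w \<subseteq> S \<and> md n (w + 1) \<notin> S)"
    using S nondeg unfolding blockend_def by auto
  also have "\<dots> = md n (?b + 1 + (int r - 1))"
  proof (rule the_run_end_eq[OF n_pos])
    show "md n (?b + 1 + t) \<in> S" if "0 \<le> t" "t \<le> int r - 1" for t
      using that run shift by simp
    show "md n (?b + 1 + (int r - 1) + 1) \<notin> S"
      using shift[of "int r"] stop by (simp add: algebra_simps)
  qed (use r in auto)
  finally show ?thesis by (simp add: md_md_add)
qed

lemma row_tail_run:
  assumes "RowArc i \<in> set es" "md n x = T (RowArc i)"
  obtains r :: nat where "r < n" "md n (x - int r) \<in> E"
    "\<And>t. 0 \<le> t \<Longrightarrow> t < int r \<Longrightarrow> md n (x - t) \<in> circs es" "md n (x + 1) \<notin> circs es"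
proof -
  obtain r where "r < n" "\<And>t. 0 \<le> t \<Longrightarrow> t < int r \<Longrightarrow> FwdArc (md n (x - t)) \<in> set es"
    "FwdArc (md n (x - int r)) \<notin> set es" "RevArc (md n (x - int r)) \<notin> set es"
    "md n (x - int r) \<in> T ` set es" "FwdArc (md n (x + 1)) \<notin> set es"
    using run_back_to_node[OF n_pos inj_on_tail, of FwdArc RevArc "RowArc i" x] assms by auto
  then show ?thesis
    using that md_in_range[OF n_pos] by (auto simp: ess_bullets_iff nodes_eq_tails circs_def)
qed

lemma row_head_run:
  assumes "RowArc i \<in> set es" "md n x = H (RowArc i)"
  obtains r :: nat where "r < n" "md n (x - int r) \<in> E"
    "\<And>t. 0 \<le> t \<Longrightarrow> t < int r \<Longrightarrow> md n (x - t) \<in> crosses es" "md n (x + 1) \<notin> crosses es"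
proof -
  obtain r where "r < n" "\<And>t. 0 \<le> t \<Longrightarrow> t < int r \<Longrightarrow> RevArc (md n (x - t)) \<in> set es"
    "RevArc (md n (x - int r)) \<notin> set es" "FwdArc (md n (x - int r)) \<notin> set es"
    "md n (x - int r) \<in> H ` set es" "RevArc (md n (x + 1)) \<notin> set es"
    using run_back_to_node[OF n_pos inj_on_head, of RevArc FwdArc "RowArc i" x] assms by auto
  then show ?thesis
    using that md_in_range[OF n_pos] by (auto simp: ess_bullets_iff nodes_eq_heads crosses_def)
qed

lemma Bminus_periodic_count_tail:
  assumes "RowArc i \<in> set es" "md n x = T (RowArc i)"
  shows "Bminus n l k es (N x) = md n x"
proof -
  obtain r :: nat where r: "r < n" "md n (x - int r) \<in> E"
    and run: "\<And>t. 0 \<le> t \<Longrightarrow> t < int r \<Longrightarrow> md n (x - t) \<in> circs es"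
    and stop: "md n (x + 1) \<notin> circs es"
    using row_tail_run[OF assms] by blast
  have bul: "bul n l k es (N x) = md n (x - int r)"
    using r(2) run by (intro bul_periodic_count_run) (auto simp: ess_bullets_iff circs_def)
  show ?thesis
  proof (cases "r = 0")
    case True
    then show ?thesis using stop by (simp add: Bminus_def bul md_md_add)
  next
    case False
    have "md n (md n (x - int r) + 1) \<in> circs es"
      using run[of "int r - 1"] False md_md_add[of n "x - int r" 1] by (simp add: algebra_simps)
    then show ?thesis
      using blockend_run[of "circs es" r x] False r run stop by (simp add: Bminus_def bul)
  qed
qed

lemma Bplus_periodic_count_head:
  assumes "RowArc i \<in> set es" "md n x = H (RowArc i)"
  shows "Bplus n l k es (N x) = md n x"
proof -
  obtain r :: nat where r: "r < n" "md n (x - int r) \<in> E"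
    and run: "\<And>t. 0 \<le> t \<Longrightarrow> t < int r \<Longrightarrow> md n (x - t) \<in> crosses es"
    and stop: "md n (x + 1) \<notin> crosses es"
    using row_head_run[OF assms] by blast
  have bul: "bul n l k es (N x) = md n (x - int r)"
    using r(2) run by (intro bul_periodic_count_run) (auto simp: ess_bullets_iff crosses_def)
  show ?thesis
  proof (cases "r = 0")
    case True
    then show ?thesis using stop by (simp add: Bplus_def bul md_md_add)
  next
    case False
    have "md n (md n (x - int r) + 1) \<in> crosses es"
      using run[of "int r - 1"] False md_md_add[of n "x - int r" 1] by (simp add: algebra_simps)
    then show ?thesis
      using blockend_run[of "crosses es" r x] False r run stop by (simp add: Bplus_def bul)
  qed
qed

lemma ess_bullets_nonempty: "RowArc i \<in> set es \<Longrightarrow> E \<noteq> {}"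
  using row_tail_run[of i "l i - 1"] by auto

lemma Bminus_Bplus_md_card:
  assumes "md (card E) a = md (card E) b"
  shows "Bminus n l k es a = Bminus n l k es b" "Bplus n l k es a = Bplus n l k es b"
  using assms unfolding Bminus_def Bplus_def bul_def by simp_all

lemma no_fwd_and_rev: "FwdArc j \<in> set es \<Longrightarrow> RevArc j \<notin> set es"
  using nondeg by (auto simp: circs_def crosses_def)

lemma arc_after_circles_from_ess_bullet:
  assumes \<beta>: "\<beta> \<in> E" and e: "e \<in> set es" "e \<notin> range RowArc" "T e = md n (\<beta> + int d)"
    and circles: "\<And>t. 1 \<le> t \<Longrightarrow> t \<le> d \<Longrightarrow> md n (\<beta> + int t) \<in> circs es"
  shows "e = FwdArc (md n (\<beta> + int d + 1))"
proof (cases e)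
  case (FwdArc j)
  then show ?thesis using e short_arc_bounds(1) md_minus_1_eqD[of j n] by (simp add: md_md_add)
next
  case (RevArc j)
  then have j: "RevArc j \<in> set es" "j = md n (\<beta> + int d)"
    using e short_arc_bounds(2) by (auto simp: md_eq_self)
  show ?thesis
  proof (cases "d = 0")
    case True
    then show ?thesis using \<beta> j by (simp add: ess_bullets_iff md_eq_self)
  next
    case False
    then show ?thesis using circles[of d] j no_fwd_and_rev by (simp add: circs_def)
  qed
qed (use e in simp)

lemma walk_to_row_tail:
  assumes \<beta>: "\<beta> \<in> E" and row: "RowArc i0 \<in> set es"
  obtains i u where "RowArc i \<in> set es" "T (RowArc i) = md n (\<beta> + int u)"
    "\<And>t. 1 \<le> t \<Longrightarrow> t \<le> u \<Longrightarrow> md n (\<beta> + int t) \<in> circs es"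
proof -
  let ?L = "length es"
  have L: "?L > 0" using es_nonempty by simp
  obtain t0 where t0: "t0 < ?L" "T (es ! t0) = \<beta>"
    using \<beta> unfolding ess_bullets_iff nodes_eq_tails by (metis imageE in_set_conv_nth)
  define f where "f d = es ! ((t0 + d) mod ?L)" for d
  have f_in: "f d \<in> set es" for d unfolding f_def using L by simp
  have f_Suc: "H (f d) = T (f (Suc d))" for d
    using head_eq_tail_next[of "(t0 + d) mod ?L"] L unfolding f_def by (simp add: mod_Suc_eq)
  obtain t1 where "t1 < ?L" "es ! t1 = RowArc i0" using row by (metis in_set_conv_nth)
  then have "f (t1 + ?L - t0) = RowArc i0" using t0 unfolding f_def by simp
  then have ex: "\<exists>d i. f d = RowArc i" by blast
  define u where "u = (LEAST d. \<exists>i. f d = RowArc i)"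
  obtain i where i: "f u = RowArc i" using LeastI_ex[OF ex] unfolding u_def by blast
  have "T (f d) = md n (\<beta> + int d) \<and> (\<forall>t. 1 \<le> t \<and> t \<le> d \<longrightarrow> md n (\<beta> + int t) \<in> circs es)"
    if "d \<le> u" for d
    using that
  proof (induction d)
    case 0
    then show ?case using t0 \<beta> ess_bullets_subset by (auto simp: f_def md_eq_self)
  next
    case (Suc d)
    then have IH: "T (f d) = md n (\<beta> + int d)" "\<forall>t. 1 \<le> t \<and> t \<le> d \<longrightarrow> md n (\<beta> + int t) \<in> circs es"
      by auto
    have "d < u" using Suc.prems by simp
    then have "f d \<notin> range RowArc" unfolding u_def using not_less_Least by blast
    then have "f d = FwdArc (md n (\<beta> + int d + 1))"
      using arc_after_circles_from_ess_bullet[OF \<beta> f_in] IH by blast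
    then have "md n (\<beta> + int (Suc d)) \<in> circs es" "T (f (Suc d)) = md n (\<beta> + int (Suc d))"
      using f_in[of d] f_Suc[of d] by (auto simp: circs_def ac_simps)
    then show ?case using IH(2) by (auto simp: le_Suc_eq)
  qed
  from this[of u] show ?thesis using that[of i u] i f_in[of u] by simp
qed

abbreviation "rows \<equiv> {i. RowArc i \<in> set es}"

definition tail_index :: "nat \<Rightarrow> int" where
  "tail_index i = md (card E) (N (l i - 1))"

lemma tail_index_in_range: "RowArc i \<in> set es \<Longrightarrow> tail_index i \<in> {1..int (card E)}"
  using ess_bullets_nonempty finite_ess_bullets md_in_range unfolding tail_index_def
  by (simp add: card_gt_0_iff)

lemma Bminus_tail_index:
  assumes "RowArc i \<in> set es"
  shows "Bminus n l k es (tail_index i) = T (RowArc i)"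
proof -
  have "Bminus n l k es (tail_index i) = Bminus n l k es (N (l i - 1))"
    unfolding tail_index_def by (rule Bminus_Bplus_md_card) simp
  also have "\<dots> = md n (l i - 1)" by (rule Bminus_periodic_count_tail[OF assms]) simp
  finally show ?thesis by simp
qed

lemma inj_on_tail_index: "inj_on tail_index rows"
proof (rule inj_onI)
  fix i i' assume "i \<in> rows" "i' \<in> rows" "tail_index i = tail_index i'"
  then have "T (RowArc i) = T (RowArc i')" using Bminus_tail_index by (metis mem_Collect_eq)
  with \<open>i \<in> rows\<close> \<open>i' \<in> rows\<close> show "i = i'"
    by (metis arc.inject(1) inj_onD inj_on_tail mem_Collect_eq)
qed

lemma tail_index_surj:
  assumes row: "RowArc i0 \<in> set es" and g: "g \<in> {1..int (card E)}"
  shows "g \<in> tail_index ` rows"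
proof -
  let ?xs = "sorted_list_of_set E"
  have distinct: "distinct ?xs" and len: "length ?xs = card E" by simp_all
  define \<beta> where "\<beta> = ?xs ! nat (g - 1)"
  have \<beta>: "\<beta> \<in> E"
    unfolding \<beta>_def using g finite_ess_bullets nth_mem[of "nat (g - 1)" ?xs]
    by (simp add: nat_less_iff)
  obtain i u where i: "RowArc i \<in> set es" "T (RowArc i) = md n (\<beta> + int u)"
    and circles: "\<And>t. 1 \<le> t \<Longrightarrow> t \<le> u \<Longrightarrow> md n (\<beta> + int t) \<in> circs es"
    using walk_to_row_tail[OF \<beta> row] by blast
  have "N (\<beta> + int u) = N \<beta>"
    using circles by (intro periodic_count_const[OF n_pos ess_bullets_subset])
      (auto simp: ess_bullets_iff circs_def)
  moreover obtain c where "l i - 1 = \<beta> + int u + c * int n"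
    using i(2) md_eq_md_iff by auto
  ultimately have tail_index: "tail_index i = md (card E) (N \<beta>)"
    unfolding tail_index_def by (simp add: periodic_count_add_period[OF n_pos] md_add_mult)
  have "card E > 0" using \<beta> finite_ess_bullets card_gt_0_iff by blast
  then have range: "md (card E) (N \<beta>) \<in> {1..int (card E)}" by (rule md_in_range)
  have "?xs ! nat (md (card E) (N \<beta>) - 1) = ?xs ! nat (g - 1)"
    using nth_sorted_list_of_set_periodic_count[OF n_pos ess_bullets_subset, of \<beta>] \<beta>
      ess_bullets_subset
    by (auto simp: md_eq_self \<beta>_def)
  then have "nat (md (card E) (N \<beta>) - 1) = nat (g - 1)"
    using nth_eq_iff_index_eq[OF distinct] range g len by auto
  then have "tail_index i = g" using tail_index range g by (simp add: nat_eq_iff)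
  then show ?thesis using i(1) by blast
qed

lemma tail_index_image:
  assumes "RowArc i0 \<in> set es"
  shows "tail_index ` rows = {1..int (card E)}"
  using tail_index_in_range tail_index_surj[OF assms] by auto

lemma card_rows:
  assumes "RowArc i0 \<in> set es"
  shows "card rows = card E"
proof -
  have "bij_betw tail_index rows {1..int (card E)}"
    using inj_on_tail_index tail_index_image[OF assms] by (simp add: bij_betw_def)
  then show ?thesis by (simp add: bij_betw_same_card)
qed

definition row_jump :: "nat \<Rightarrow> int" where
  "row_jump i = N (l i + k i - 1) - N (l i - 1)"

lemma periodic_count_row_arc:
  assumes "md n x = md n (l i - 1)"
  shows "N (x + k i) = N x + row_jump i"
proof -
  obtain c where c: "x = l i - 1 + c * int n" using assms md_eq_md_iff by blast
  have "N (x + k i) = N (l i + k i - 1 + c * int n)" unfolding c by (simp add: algebra_simps)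
  then show ?thesis
    unfolding c row_jump_def periodic_count_add_period[OF n_pos] by simp
qed

lemma jumped_columns:
  assumes "RowArc i \<in> set es" "md n x = md n (l i - 1)"
  shows "cint_co n (l i) (l i + k i) = md n ` {x + 1..x + k i}"
  using row_arc_bounds[OF assms(1)] by (intro cint_co_eq_image[OF n_pos _ _ assms(2)]) auto

lemma card_jumped_ess_bullets:
  assumes "RowArc i \<in> set es"
  shows "int (card {b \<in> E. jumps_over n l k i b}) = row_jump i"
proof -
  have k: "int (nat (k i)) = k i" "nat (k i) \<le> n" using row_arc_bounds[OF assms] by auto
  have "{b \<in> E. jumps_over n l k i b} =
      {b \<in> E. b \<in> md n ` {l i - 1 + 1..l i - 1 + int (nat (k i))}}"
    unfolding jumps_over_def jumped_columns[OF assms refl] k(1) by simp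
  then show ?thesis
    using periodic_count_window[OF n_pos ess_bullets_subset k(2), of "l i - 1"]
    unfolding row_jump_def k(1) by (simp add: algebra_simps)
qed

lemma Bplus_tail_index_row_jump:
  assumes "RowArc i \<in> set es"
  shows "Bplus n l k es (tail_index i + row_jump i) = H (RowArc i)"
proof -
  have "Bplus n l k es (tail_index i + row_jump i) = Bplus n l k es (N (l i + k i - 1))"
    unfolding tail_index_def row_jump_def by (rule Bminus_Bplus_md_card) (simp add: md_md_add)
  also have "\<dots> = md n (l i + k i - 1)" by (rule Bplus_periodic_count_head[OF assms]) simp
  finally show ?thesis by simp
qed

definition lifted_tail :: "nat \<Rightarrow> int" where
  "lifted_tail t = T (es ! 0) + (\<Sum>u<t. lenF k (es ! u))"

definition rows_before :: "nat \<Rightarrow> nat" where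
  "rows_before t = card {u. u < t \<and> es ! u \<in> range RowArc}"

lemma md_lifted_tail: "t < length es \<Longrightarrow> md n (lifted_tail t) = T (es ! t)"
proof (induction t)
  case 0
  then show ?case using tail_in_range by (simp add: lifted_tail_def md_eq_self)
next
  case (Suc t)
  have "md n (lifted_tail (Suc t)) = md n (md n (lifted_tail t) + lenF k (es ! t))"
    by (simp add: lifted_tail_def md_md_add add.assoc)
  also have "\<dots> = H (es ! t)" using Suc by (simp add: head_eq_tail_plus_length)
  also have "\<dots> = T (es ! Suc t)" using head_eq_tail_next[of t] Suc.prems by simp
  finally show ?case .
qed

lemma lifted_tail_length:
  assumes "p * int n = (\<Sum>e\<leftarrow>es. lenF k e)"
  shows "lifted_tail (length es) = lifted_tail 0 + p * int n"
  using assms unfolding lifted_tail_def by (simp add: sum_list_sum_nth atLeast0LessThan)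

lemma rows_before_Suc:
  "rows_before (Suc t) = rows_before t + (if es ! t \<in> range RowArc then 1 else 0)"
proof -
  have "{u. u < Suc t \<and> es ! u \<in> range RowArc} =
      {u. u < t \<and> es ! u \<in> range RowArc} \<union> (if es ! t \<in> range RowArc then {t} else {})"
    by (auto simp: less_Suc_eq)
  then show ?thesis unfolding rows_before_def by (auto simp: card_insert_if)
qed

lemma rows_before_length: "rows_before (length es) = card rows"
proof -
  have "bij_betw (nth es) {u. u < length es \<and> es ! u \<in> range RowArc} (set es \<inter> range RowArc)"
  proof (rule bij_betw_imageI)
    show "inj_on (nth es) {u. u < length es \<and> es ! u \<in> range RowArc}"
      using distinct_arcs by (simp add: inj_on_def nth_eq_iff_index_eq)
  qed (force simp: in_set_conv_nth)
  then have "rows_before (length es) = card (set es \<inter> range RowArc)"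
    unfolding rows_before_def by (rule bij_betw_same_card)
  also have "set es \<inter> range RowArc = RowArc ` rows" by auto
  finally show ?thesis by (simp add: card_image inj_on_def)
qed

lemma rows_before_attained:
  assumes "c < rows_before (length es)"
  obtains u where "u < length es" "es ! u \<in> range RowArc" "rows_before u = c"
proof -
  have ex: "\<exists>u. c < rows_before u" using assms by blast
  define u' where "u' = (LEAST u. c < rows_before u)"
  have c: "c < rows_before u'" unfolding u'_def by (rule LeastI_ex[OF ex])
  have "u' \<le> length es" unfolding u'_def using assms by (rule Least_le)
  have "u' \<noteq> 0"
  proof
    assume "u' = 0"
    then show False using c by (simp add: rows_before_def)
  qed
  then obtain u where u: "u' = Suc u" using not0_implies_Suc by blast
  have "\<not> c < rows_before u" using u unfolding u'_def by (metis lessI not_less_Least)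
  then have "es ! u \<in> range RowArc" "rows_before u = c"
    using c u rows_before_Suc[of u] by (auto split: if_splits)
  moreover have "u < length es" using u \<open>u' \<le> length es\<close> by simp
  ultimately show ?thesis using that by blast
qed

lemma periodic_count_lifted_tail_Suc:
  assumes t: "t < length es"
  shows "N (lifted_tail (Suc t)) =
    N (lifted_tail t) + (case es ! t of RowArc i \<Rightarrow> row_jump i | _ \<Rightarrow> 0)"
proof -
  have e: "es ! t \<in> set es" and md: "md n (lifted_tail t) = T (es ! t)"
    using t md_lifted_tail by simp_all
  have step: "lifted_tail (Suc t) = lifted_tail t + lenF k (es ! t)"
    by (simp add: lifted_tail_def)
  show ?thesis
  proof (cases "es ! t")
    case (RowArc i)
    then show ?thesis using step md periodic_count_row_arc[of "lifted_tail t" i] by simp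
  next
    case (FwdArc j)
    have "md n (lifted_tail t + 1) = md n (md n (lifted_tail t) + 1)" by (simp add: md_md_add)
    also have "\<dots> = md n (md n (j - 1) + 1)" using md FwdArc by simp
    also have "\<dots> = j" using e FwdArc short_arc_bounds(1) by (simp add: md_md_add md_eq_self)
    finally have "md n (lifted_tail t + 1) = j" .
    then have "md n (lifted_tail t + 1) \<notin> E" using e FwdArc by (simp add: ess_bullets_iff)
    then show ?thesis
      using step FwdArc periodic_count_plus_1[OF n_pos ess_bullets_subset, of "lifted_tail t"]
      by simp
  next
    case (RevArc j)
    then have "md n (lifted_tail t - 1 + 1) = j"
      using md e short_arc_bounds(2) by (simp add: md_eq_self)
    then have "md n (lifted_tail t - 1 + 1) \<notin> E" using e RevArc by (simp add: ess_bullets_iff)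
    then show ?thesis
      using step RevArc periodic_count_plus_1[OF n_pos ess_bullets_subset, of "lifted_tail t - 1"]
      by simp
  qed
qed

lemma ess_bullets_empty_if_no_rows:
  assumes "rows = {}"
  shows "E = {}"
proof
  show "E \<subseteq> {}"
  proof
    fix \<beta> assume \<beta>: "\<beta> \<in> E"
    have "\<beta> \<in> nodes n l k es" using \<beta> ess_bullets_iff by blast
    then obtain e e' where e: "e \<in> set es" "T e = \<beta>" and e': "e' \<in> set es" "H e' = \<beta>"
      unfolding nodes_eq_tails by (metis imageE nodes_eq_heads nodes_eq_tails)
    have "FwdArc (md n (\<beta> + 1)) \<in> set es"
    proof (cases e)
      case (FwdArc j)
      then show ?thesis using e short_arc_bounds(1) md_minus_1_eqD[of j n \<beta>] by auto
    qed (use assms e \<beta> short_arc_bounds(2) in \<open>auto simp: ess_bullets_iff md_eq_self\<close>)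
    moreover have "RevArc (md n (\<beta> + 1)) \<in> set es"
    proof (cases e')
      case (RevArc j)
      then show ?thesis using e' short_arc_bounds(2) md_minus_1_eqD[of j n \<beta>] by auto
    qed (use assms e' \<beta> short_arc_bounds(1) in \<open>auto simp: ess_bullets_iff md_eq_self\<close>)
    ultimately show "\<beta> \<in> {}" using no_fwd_and_rev by blast
  qed
qed simp

lemma consecutive_short_arcs_same_length:
  assumes e: "e \<in> set es" "e \<notin> range RowArc" and e': "e' \<in> set es" "e' \<notin> range RowArc"
    and "H e = T e'"
  shows "lenF k e = lenF k e'"
proof (cases e)
  case (FwdArc j)
  show ?thesis
  proof (cases e')
    case (RevArc j')
    then have "j = j'"
      using FwdArc assms short_arc_bounds by (simp add: md_eq_self)
    then show ?thesis using FwdArc RevArc e e' no_fwd_and_rev by blast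
  qed (use FwdArc e' in simp_all)
next
  case (RevArc j)
  show ?thesis
  proof (cases e')
    case (FwdArc j')
    then have "j' = j"
      using RevArc assms short_arc_bounds md_minus_1_eqD[of j' n "md n (j - 1)"]
        md_minus_1_eqD[of j n "md n (j - 1)"] by simp
    then show ?thesis using FwdArc RevArc e e' no_fwd_and_rev by blast
  qed (use RevArc e' in simp_all)
qed (use e in simp)

lemma length_le_n: "length es \<le> n"
proof -
  have "set (map T es) \<subseteq> {1..int n}"
    using tail_in_range by auto
  then have "card (set (map T es)) \<le> n" using card_mono[of "{1..int n}"] by fastforce
  then show ?thesis using distinct_card[OF distinct_tails] by simp
qed

lemma winding_number_if_no_rows:
  assumes "rows = {}" and wind: "p * int n = (\<Sum>e\<leftarrow>es. lenF k e)"
  shows "\<bar>p\<bar> = 1"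
proof -
  have no_row: "es ! t \<notin> range RowArc" if "t < length es" for t
    using assms(1) that nth_mem by fastforce
  have same: "lenF k (es ! t) = lenF k (es ! 0)" if "t < length es" for t
    using that
  proof (induction t)
    case (Suc t)
    then show ?case
      using consecutive_short_arcs_same_length[of "es ! t" "es ! Suc t"] head_eq_tail_next[of t]
        no_row
      by simp
  qed simp
  have unit: "\<bar>lenF k (es ! 0)\<bar> = 1"
    using no_row[of 0] es_nonempty by (cases "es ! 0") auto
  have "(\<Sum>e\<leftarrow>es. lenF k e) = int (length es) * lenF k (es ! 0)"
    using same by (simp add: sum_list_sum_nth atLeast0LessThan)
  then have "\<bar>p\<bar> * int n = int (length es)"
    using wind unit by (metis abs_mult abs_of_nat mult.right_neutral)
  moreover have "0 < length es" "length es \<le> n" using es_nonempty length_le_n by simp_all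
  ultimately have "0 < \<bar>p\<bar> * int n" "\<bar>p\<bar> * int n \<le> 1 * int n" by simp_all
  then show ?thesis using n_pos by (simp add: zero_less_mult_iff mult_le_cancel_right)
qed

end

section \<open>Circuits with row arcs\<close>

locale F_circuit_rows = F_circuit +
  assumes nodom: "no_dominating_rows m n A" and row_exists: "\<exists>i. RowArc i \<in> set es"
begin

lemma card_ess_bullets_pos: "card E > 0"
  using row_exists ess_bullets_nonempty finite_ess_bullets by (auto simp: card_gt_0_iff)

text \<open>If row \<open>b\<close> starts right after row \<open>a\<close> and does not end after it, \<open>a\<close> dominates \<open>b\<close>; as
  distinct heads lie in distinct blocks, the head of \<open>b\<close> is then in a later block as well.\<close>
lemma row_jump_le:
  assumes a: "RowArc a \<in> set es" and b: "RowArc b \<in> set es"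
    and xa: "md n xa = md n (l a - 1)" and xb: "md n xb = md n (l b - 1)"
    and next_tail: "N xb = N xa + 1"
  shows "row_jump a \<le> row_jump b"
proof (cases "a = b")
  case False
  have "xa < xb"
    using periodic_count_mono[OF n_pos ess_bullets_subset, of xb xa] next_tail by linarith
  have "xa + k a < xb + k b"
  proof (rule ccontr)
    assume "\<not> xa + k a < xb + k b"
    then have "md n ` {xb + 1..xb + k b} \<subseteq> md n ` {xa + 1..xa + k a}"
      using \<open>xa < xb\<close> by (intro image_mono) auto
    then have "dominates n A a b"
      using circ row_arc_bounds(1)[OF a] row_arc_bounds(1)[OF b]
        jumped_columns[OF a xa] jumped_columns[OF b xb]
      unfolding dominates_def circular_wit_def by auto
    then show False
      using nodom row_arc_bounds(1)[OF a] row_arc_bounds(1)[OF b] False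
      unfolding no_dominating_rows_def by blast
  qed
  then have "N (xa + k a) \<le> N (xb + k b)"
    by (intro periodic_count_mono[OF n_pos ess_bullets_subset]) simp
  moreover have "N (xa + k a) \<noteq> N (xb + k b)"
  proof
    have heads: "md n (xa + k a) = H (RowArc a)" "md n (xb + k b) = H (RowArc b)"
      using xa xb md_md_add[of n xa "k a"] md_md_add[of n xb "k b"]
        md_md_add[of n "l a - 1" "k a"] md_md_add[of n "l b - 1" "k b"]
      by (simp_all add: algebra_simps)
    assume "N (xa + k a) = N (xb + k b)"
    then have "H (RowArc a) = H (RowArc b)"
      using Bplus_periodic_count_head[OF a heads(1)] Bplus_periodic_count_head[OF b heads(2)] heads
      by simp
    then show False using inj_onD[OF inj_on_head _ a b] False by simp
  qed
  ultimately show ?thesis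
    using periodic_count_row_arc[OF xa] periodic_count_row_arc[OF xb] next_tail by simp
qed simp

definition row_of_index :: "int \<Rightarrow> nat" where
  "row_of_index g = the_inv_into rows tail_index (md (card E) g)"

lemma row_of_index:
  "RowArc (row_of_index g) \<in> set es" "tail_index (row_of_index g) = md (card E) g"
proof -
  obtain i0 where i0: "RowArc i0 \<in> set es" using row_exists by blast
  have "md (card E) g \<in> tail_index ` rows"
    using tail_index_image[OF i0] md_in_range[OF card_ess_bullets_pos] by simp
  then show "RowArc (row_of_index g) \<in> set es" "tail_index (row_of_index g) = md (card E) g"
    using the_inv_into_into[OF inj_on_tail_index] f_the_inv_into_f[OF inj_on_tail_index]
    unfolding row_of_index_def by auto
qed

lemma row_of_tail_index: "RowArc i \<in> set es \<Longrightarrow> row_of_index (tail_index i) = i"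
  using inj_on_tail_index row_of_index tail_index_in_range
  by (simp add: inj_on_def md_eq_self)

lemma lift_of_row_of_index:
  obtains x where "md n x = md n (l (row_of_index g) - 1)" "N x = g"
proof -
  let ?i = "row_of_index g"
  have "md (card E) g = md (card E) (N (l ?i - 1))"
    using row_of_index(2) unfolding tail_index_def by simp
  then obtain c where "g = N (l ?i - 1) + c * int (card E)" using md_eq_md_iff by blast
  then have "N (l ?i - 1 + c * int n) = g" by (simp add: periodic_count_add_period[OF n_pos])
  then show ?thesis using that md_add_mult by blast
qed

lemma row_jump_const:
  assumes "RowArc i \<in> set es" "RowArc i' \<in> set es"
  shows "row_jump i = row_jump i'"
proof -
  let ?f = "\<lambda>g. row_jump (row_of_index g)"
  have step: "?f g \<le> ?f (g + 1)" for g
  proof -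
    obtain xa where "md n xa = md n (l (row_of_index g) - 1)" "N xa = g"
      using lift_of_row_of_index .
    moreover obtain xb where "md n xb = md n (l (row_of_index (g + 1)) - 1)" "N xb = g + 1"
      using lift_of_row_of_index .
    ultimately show ?thesis using row_jump_le row_of_index(1) by simp
  qed
  have period: "?f (g + int (card E)) = ?f g" for g
    by (simp add: row_of_index_def md_add_mult[of _ g 1, simplified])
  have "?f (tail_index i) = ?f (tail_index i')"
    using mono_step_periodic_const[OF step period] card_ess_bullets_pos by simp
  then show ?thesis using assms by (simp add: row_of_tail_index)
qed

lemma periodic_count_lifted_tail:
  assumes i: "RowArc i \<in> set es" and t: "t \<le> length es"
  shows "N (lifted_tail t) = N (lifted_tail 0) + row_jump i * int (rows_before t)"
  using t
proof (induction t)
  case (Suc t)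
  then have "N (lifted_tail (Suc t)) =
      N (lifted_tail t) + (if es ! t \<in> range RowArc then row_jump i else 0)"
    using periodic_count_lifted_tail_Suc[of t] row_jump_const[OF _ i] nth_mem[of t es]
    by (cases "es ! t") auto
  then show ?case using Suc rows_before_Suc[of t] by (simp add: algebra_simps)
qed (simp add: rows_before_def)

context
  fixes p :: int
  assumes wind: "p * int n = (\<Sum>e\<leftarrow>es. lenF k e)"
begin

lemma row_jump_eq_winding_number:
  assumes i: "RowArc i \<in> set es"
  shows "row_jump i = p"
proof -
  have "N (lifted_tail (length es)) = N (lifted_tail 0) + row_jump i * int (card E)"
    using periodic_count_lifted_tail[OF i order.refl] rows_before_length card_rows[OF i] by simp
  moreover have "N (lifted_tail (length es)) = N (lifted_tail 0) + p * int (card E)"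
    using lifted_tail_length[OF wind] periodic_count_add_period[OF n_pos] by simp
  ultimately show ?thesis using card_ess_bullets_pos by simp
qed

lemma coprime_card_ess_bullets_winding_number: "gcd (int (card E)) p = 1"
proof (rule gcd_eq_1_if_no_small_multiple)
  obtain i where i: "RowArc i \<in> set es" using row_exists by blast
  have rows_before: "rows_before (length es) = card E"
    using rows_before_length card_rows[OF i] by simp
  have Bminus: "Bminus n l k es (N (lifted_tail u)) = T (es ! u)"
    if "u < length es" "es ! u \<in> range RowArc" for u
    using that Bminus_periodic_count_tail[of _ "lifted_tail u"] md_lifted_tail nth_mem by fastforce
  fix c assume c: "0 < c" "c < int (card E)"
  obtain u0 where u0: "u0 < length es" "es ! u0 \<in> range RowArc" "rows_before u0 = 0"
    using rows_before_attained[of 0] rows_before card_ess_bullets_pos by auto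
  have "nat c < rows_before (length es)" using rows_before c by (simp add: nat_less_iff)
  then obtain u where u: "u < length es" "es ! u \<in> range RowArc" "rows_before u = nat c"
    by (rule rows_before_attained)
  show "\<not> int (card E) dvd p * c"
  proof
    assume "int (card E) dvd p * c"
    then obtain d where "N (lifted_tail u) = N (lifted_tail u0) + d * int (card E)"
      using periodic_count_lifted_tail[OF i, of u] periodic_count_lifted_tail[OF i, of u0]
        row_jump_eq_winding_number[OF i] u u0 c
      by (auto simp: dvd_def algebra_simps)
    then have "Bminus n l k es (N (lifted_tail u)) = Bminus n l k es (N (lifted_tail u0))"
      by (intro Bminus_Bplus_md_card) (simp add: md_add_mult)
    then have "T (es ! u) = T (es ! u0)" using Bminus u u0 by simp
    then have "u = u0" using distinct_tails u(1) u0(1) by (simp add: nth_eq_iff_index_eq[symmetric])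
    then show False using u u0 c by simp
  qed
qed (use card_ess_bullets_pos in simp)

end

end

theorem lemma7p2:
  fixes m n :: nat and A :: "nat \<Rightarrow> int \<Rightarrow> nat"
    and l k :: "nat \<Rightarrow> int" and es :: "arc list" and p :: int
  assumes circ: "circular_wit m n A l k"
    and nodom: "no_dominating_rows m n A"
    and circuit: "is_circuit m n l k es"
    and nondeg: "circs es \<inter> crosses es = {}"
    and wind: "p * int n = (\<Sum>e\<leftarrow>es. lenF k e)"
  shows "card {i. RowArc i \<in> set es} = card (ess_bullets n l k es)
    \<and> (\<forall>i. RowArc i \<in> set es \<longrightarrow>
          int (card {b \<in> ess_bullets n l k es. jumps_over n l k i b}) = p
          \<and> (\<exists>j\<in>{1..int (card (ess_bullets n l k es))}.
               tailF n l k (RowArc i) = Bminus n l k es j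
             \<and> headF n l k (RowArc i) = Bplus n l k es (j + p)))
    \<and> gcd (int (card (ess_bullets n l k es))) p = 1"
proof (cases "\<exists>i. RowArc i \<in> set es")
  case True
  then interpret F_circuit_rows m n A l k es
    using circ nodom circuit nondeg by unfold_locales
  have "\<exists>j\<in>{1..int (card E)}.
      T (RowArc i) = Bminus n l k es j \<and> H (RowArc i) = Bplus n l k es (j + p)"
    if i: "RowArc i \<in> set es" for i
    using tail_index_in_range[OF i] Bminus_tail_index[OF i] Bplus_tail_index_row_jump[OF i]
      row_jump_eq_winding_number[OF wind i] by (intro bexI[of _ "tail_index i"]) auto
  then show ?thesis
    using True card_rows card_jumped_ess_bullets row_jump_eq_winding_number[OF wind]
      coprime_card_ess_bullets_winding_number[OF wind]
    by auto
next
  case False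
  interpret F_circuit m n A l k es
    using circ circuit nondeg by unfold_locales
  have "E = {}" using False ess_bullets_empty_if_no_rows by simp
  then show ?thesis using False winding_number_if_no_rows[OF _ wind] by simp
qed

end
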